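(* Let $n\ge5$ be odd and $M$ an $n\times n$ HW-matrix. There is no spin$^c$ set $S$ for $M$ with $|S|=n-1$.
   Context: $\mathcal S=\{0,1,2,3\}$ is the Klein four-group ($\mathbb Z_2$-vector space) with $x+x=0$, $1+2=3$, $1+3=2$, $2+3=1$. $\mathcal P_n$ is the power set of $\{1,\dots,n\}$ (addition = symmetric difference, product = intersection); $|U|_2=|U|\bmod 2$; $J_M(U)=\{j:\sum_{i\in U}M_{ij}=1\}$. $M$ is an HW-matrix if it has $1$ on the diagonal and $2$ or $3$ off the diagonal, all column sums are $0$, and $J_M(U)\ne\emptyset$ for all $U\ne\emptyset,\{1,\dots,n\}$. $S\in\mathcal P_n$ is a spin$^c$ set for $M$ if $|(J_M(U)+U)\cap S|_2=\binom{|U|}2\bmod 2$ for all $U\in\mathcal P_n$. *)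

theory Defs
  imports Main
begin

text \<open>The Klein four-group S = {0,1,2,3} with x+x=0, 1+2=3, 1+3=2, 2+3=1.
  Encoded as a datatype; K0 is the zero. The sum is bitwise XOR of the labels.\<close>

datatype klein = K0 | K1 | K2 | K3

instantiation klein :: comm_monoid_add
begin

definition zero_klein :: klein where "zero_klein = K0"

fun plus_klein :: "klein \<Rightarrow> klein \<Rightarrow> klein" where
  "plus_klein K0 y = y"
| "plus_klein x K0 = x"
| "plus_klein K1 K1 = K0"
| "plus_klein K2 K2 = K0"
| "plus_klein K3 K3 = K0"
| "plus_klein K1 K2 = K3"
| "plus_klein K2 K1 = K3"
| "plus_klein K1 K3 = K2"
| "plus_klein K3 K1 = K2"
| "plus_klein K2 K3 = K1"
| "plus_klein K3 K2 = K1"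

instance
proof
  fix a b c :: klein
  show "a + b + c = a + (b + c)" by (cases a; cases b; cases c) auto
  show "a + b = b + a" by (cases a; cases b) auto
  show "0 + a = a" by (simp add: zero_klein_def)
qed

end

text \<open>Matrices are n x n with rows/columns indexed by {1..n}; entries of M outside
  that range are irrelevant. Column sums are taken in the Klein four-group.\<close>

definition J :: "nat \<Rightarrow> (nat \<Rightarrow> nat \<Rightarrow> klein) \<Rightarrow> nat set \<Rightarrow> nat set" where
  "J n M U = {j \<in> {1..n}. (\<Sum>i\<in>U. M i j) = K1}"

definition HW_matrix :: "nat \<Rightarrow> (nat \<Rightarrow> nat \<Rightarrow> klein) \<Rightarrow> bool" where
  "HW_matrix n M \<longleftrightarrow>
     (\<forall>i\<in>{1..n}. M i i = K1) \<and>
     (\<forall>i\<in>{1..n}. \<forall>j\<in>{1..n}. i \<noteq> j \<longrightarrow> M i j = K2 \<or> M i j = K3) \<and>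
     (\<forall>j\<in>{1..n}. (\<Sum>i\<in>{1..n}. M i j) = 0) \<and>
     (\<forall>U. U \<subseteq> {1..n} \<and> U \<noteq> {} \<and> U \<noteq> {1..n} \<longrightarrow> J n M U \<noteq> {})"

definition symdiff :: "'a set \<Rightarrow> 'a set \<Rightarrow> 'a set" where
  "symdiff A B = (A - B) \<union> (B - A)"

definition spinc_set :: "nat \<Rightarrow> (nat \<Rightarrow> nat \<Rightarrow> klein) \<Rightarrow> nat set \<Rightarrow> bool" where
  "spinc_set n M S \<longleftrightarrow> S \<subseteq> {1..n} \<and>
     (\<forall>U. U \<subseteq> {1..n} \<longrightarrow>
        card (symdiff (J n M U) U \<inter> S) mod 2 = (card U choose 2) mod 2)"

end

theory Submission imports Defs begin

text \<open>Encode the off-diagonal entries of rows as Booleans (K3 versus K2). For distinct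
  i, l \<in> S the spin^c condition for U = {i, l} says that rows i and l disagree in an odd
  number of the columns S - {i, l}. Correcting each row by its own parity turns this into a
  tournament on S in which all out-degrees have the same parity. A tournament without
  3-cycles is transitive, so its out-degrees are 0, 1, ..., |S| - 1; hence once |S| \<ge> 2
  there is a 3-cycle a, b, c. For it, the rows a, b, c pairwise disagree in the columns a, b, c,
  which makes J({a, b, c}) empty and contradicts the HW condition as soon as n \<ge> 4.\<close>

lemma card_filter_insert:
  assumes "finite T" "a \<notin> T"
  shows "card {j \<in> insert a T. P j} = card {j \<in> T. P j} + of_bool (P a)"
proof (cases "P a")
  case True
  then have "{j \<in> insert a T. P j} = insert a {j \<in> T. P j}" by auto
  then show ?thesis using assms True by simp
next
  case False
  then have "{j \<in> insert a T. P j} = {j \<in> T. P j}" by auto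
  then show ?thesis using False by simp
qed

lemma odd_card_filter_neq:
  assumes "finite T"
  shows "odd (card {j \<in> T. P j \<noteq> Q j}) \<longleftrightarrow> odd (card {j \<in> T. P j}) \<noteq> odd (card {j \<in> T. Q j})"
  using assms
proof (induction rule: finite_induct)
  case empty
  then show ?case by simp
next
  case (insert a T)
  then show ?case
    unfolding card_filter_insert[OF insert.hyps] by (cases "P a"; cases "Q a") auto
qed

lemma tournament_outdegree_less:
  assumes "finite S"
    and tour: "\<And>i l. i \<in> S \<Longrightarrow> l \<in> S \<Longrightarrow> i \<noteq> l \<Longrightarrow> w i l \<noteq> w l i"
    and no_cycle: "\<And>a b c. a \<in> S \<Longrightarrow> b \<in> S \<Longrightarrow> c \<in> S \<Longrightarrow> a \<noteq> b \<Longrightarrow> b \<noteq> c \<Longrightarrow> c \<noteq> a \<Longrightarrow>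
      w a b \<Longrightarrow> w b c \<Longrightarrow> \<not> w c a"
    and il: "i \<in> S" "l \<in> S" "i \<noteq> l" "w i l"
  shows "card {m \<in> S - {l}. w l m} < card {m \<in> S - {i}. w i m}"
proof -
  have "insert l {m \<in> S - {l}. w l m} \<subseteq> {m \<in> S - {i}. w i m}"
  proof
    fix m assume m: "m \<in> insert l {m \<in> S - {l}. w l m}"
    show "m \<in> {m \<in> S - {i}. w i m}"
    proof (cases "m = l")
      case False
      with m have "m \<in> S" "m \<noteq> l" "w l m" by auto
      moreover have "m \<noteq> i" using calculation tour il by blast
      ultimately have "\<not> w m i" using no_cycle il by blast
      then show ?thesis using tour \<open>m \<in> S\<close> \<open>m \<noteq> i\<close> il by blast
    qed (use il in auto)
  qed
  then have "card (insert l {m \<in> S - {l}. w l m}) \<le> card {m \<in> S - {i}. w i m}"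
    using assms(1) by (intro card_mono) auto
  then show ?thesis using assms(1) by simp
qed

lemma tournament_3cycle_if_outdegrees_same_parity:
  assumes fin: "finite S" and two: "card S \<ge> 2"
    and tour: "\<And>i l. i \<in> S \<Longrightarrow> l \<in> S \<Longrightarrow> i \<noteq> l \<Longrightarrow> w i l \<noteq> w l i"
    and par: "\<And>i l. i \<in> S \<Longrightarrow> l \<in> S \<Longrightarrow>
                odd (card {m \<in> S - {i}. w i m}) = odd (card {m \<in> S - {l}. w l m})"
  shows "\<exists>a\<in>S. \<exists>b\<in>S. \<exists>c\<in>S. a \<noteq> b \<and> b \<noteq> c \<and> c \<noteq> a \<and> w a b \<and> w b c \<and> w c a"
proof (rule ccontr)
  assume "\<not> ?thesis"
  then have no_cycle: "\<And>a b c. a \<in> S \<Longrightarrow> b \<in> S \<Longrightarrow> c \<in> S \<Longrightarrow> a \<noteq> b \<Longrightarrow> b \<noteq> c \<Longrightarrow> c \<noteq> a \<Longrightarrow>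
      w a b \<Longrightarrow> w b c \<Longrightarrow> \<not> w c a"
    by blast
  define out where "out i = card {m \<in> S - {i}. w i m}" for i
  have less: "out l < out i" if "i \<in> S" "l \<in> S" "i \<noteq> l" "w i l" for i l
    unfolding out_def
    by (rule tournament_outdegree_less[where w = w]) (use fin tour no_cycle that in blast)+
  have "inj_on out S"
  proof (rule inj_onI)
    fix i l assume il: "i \<in> S" "l \<in> S" "out i = out l"
    show "i = l"
      using less[of i l] less[of l i] tour[of i l] il by fastforce
  qed
  moreover have "out ` S \<subseteq> {0..<card S}"
  proof
    fix v assume "v \<in> out ` S"
    then obtain i where i: "i \<in> S" "v = out i" by auto
    have "out i \<le> card (S - {i})" unfolding out_def using fin by (intro card_mono) auto
    also have "\<dots> < card S" using i fin two by (simp add: card_Diff_singleton)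
    finally show "v \<in> {0..<card S}" using i by simp
  qed
  moreover have "finite {0..<card S}" by simp
  ultimately have "out ` S = {0..<card S}"
    by (intro card_subset_eq) (simp_all add: card_image)
  then have "0 \<in> out ` S" "1 \<in> out ` S" using two by auto
  then obtain i l where "i \<in> S" "l \<in> S" "out i = 0" "out l = 1" by (metis imageE)
  then show False using par[of i l] unfolding out_def by simp
qed

lemma rows_odd_disagreement_triangle:
  fixes x :: "'a \<Rightarrow> 'a \<Rightarrow> bool"
  assumes fin: "finite S" and two: "card S \<ge> 2"
    and odd_dis: "\<And>i l. i \<in> S \<Longrightarrow> l \<in> S \<Longrightarrow> i \<noteq> l \<Longrightarrow> odd (card {j \<in> S - {i, l}. x i j \<noteq> x l j})"
  shows "\<exists>a\<in>S. \<exists>b\<in>S. \<exists>c\<in>S. a \<noteq> b \<and> b \<noteq> c \<and> c \<noteq> a \<and>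
           x b a \<noteq> x c a \<and> x a b \<noteq> x c b \<and> x a c \<noteq> x b c"
proof -
  define y where "y l = odd (card {j \<in> S - {l}. x l j})" for l
  define w where "w i l = (x i l \<noteq> y l)" for i l
  have tour: "w i l \<noteq> w l i" if il: "i \<in> S" "l \<in> S" "i \<noteq> l" for i l
  proof -
    let ?T = "S - {i, l}"
    have "card {j \<in> insert l ?T. x i j} = card {j \<in> ?T. x i j} + of_bool (x i l)"
      "card {j \<in> insert i ?T. x l j} = card {j \<in> ?T. x l j} + of_bool (x l i)"
      using fin by (intro card_filter_insert; simp)+
    moreover have "insert l ?T = S - {i}" "insert i ?T = S - {l}" using il by auto
    ultimately have "card {j \<in> S - {i}. x i j} = card {j \<in> ?T. x i j} + of_bool (x i l)"
        "card {j \<in> S - {l}. x l j} = card {j \<in> ?T. x l j} + of_bool (x l i)"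
      by simp_all
    moreover have "odd (card {j \<in> ?T. x i j}) \<noteq> odd (card {j \<in> ?T. x l j})"
      using odd_dis[OF il] odd_card_filter_neq[of ?T "x i" "x l"] fin by simp
    ultimately show ?thesis unfolding w_def y_def by auto
  qed
  have par: "odd (card {m \<in> S - {i}. w i m}) = odd (card {m \<in> S. y m})" if i: "i \<in> S" for i
  proof -
    have "card {m \<in> insert i (S - {i}). y m} = card {m \<in> S - {i}. y m} + of_bool (y i)"
      using fin by (intro card_filter_insert) auto
    then have "card {m \<in> S. y m} = card {m \<in> S - {i}. y m} + of_bool (y i)"
      using i by (simp add: insert_absorb)
    then show ?thesis
      using odd_card_filter_neq[of "S - {i}" "x i" y] fin unfolding w_def y_def by auto
  qed
  have "odd (card {m \<in> S - {i}. w i m}) = odd (card {m \<in> S - {l}. w l m})"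
    if "i \<in> S" "l \<in> S" for i l
    using par that by simp
  then obtain a b c where abc: "a \<in> S" "b \<in> S" "c \<in> S" "a \<noteq> b" "b \<noteq> c" "c \<noteq> a"
      "w a b" "w b c" "w c a"
    using tournament_3cycle_if_outdegrees_same_parity[where w = w, OF fin two tour] by blast
  then have "\<not> w b a" "\<not> w c b" "\<not> w a c" using tour by metis+
  with abc show ?thesis unfolding w_def by auto
qed

lemma klein_off_sum_eq_K1:
  "a \<in> {K2, K3} \<Longrightarrow> b \<in> {K2, K3} \<Longrightarrow> a + b = K1 \<longleftrightarrow> a \<noteq> b"
  by (cases a; cases b) auto

lemma K1_plus_off_neq_K1: "b \<in> {K2, K3} \<Longrightarrow> K1 + b \<noteq> K1"
  by (cases b) auto

lemma K1_plus_distinct_off_neq_K1: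
  "b \<in> {K2, K3} \<Longrightarrow> c \<in> {K2, K3} \<Longrightarrow> b \<noteq> c \<Longrightarrow> K1 + (b + c) \<noteq> K1"
  by (cases b; cases c) auto

lemma off_sum3_neq_K1:
  "a \<in> {K2, K3} \<Longrightarrow> b \<in> {K2, K3} \<Longrightarrow> c \<in> {K2, K3} \<Longrightarrow> a + (b + c) \<noteq> K1"
  by (cases a; cases b; cases c) auto

lemma HW_matrix_diag: "HW_matrix n M \<Longrightarrow> i \<in> {1..n} \<Longrightarrow> M i i = K1"
  unfolding HW_matrix_def by blast

lemma HW_matrix_off_diag:
  "HW_matrix n M \<Longrightarrow> i \<in> {1..n} \<Longrightarrow> j \<in> {1..n} \<Longrightarrow> i \<noteq> j \<Longrightarrow> M i j \<in> {K2, K3}"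
  unfolding HW_matrix_def by blast

lemma HW_matrix_J_nonempty:
  "HW_matrix n M \<Longrightarrow> U \<subseteq> {1..n} \<Longrightarrow> U \<noteq> {} \<Longrightarrow> U \<noteq> {1..n} \<Longrightarrow> J n M U \<noteq> {}"
  unfolding HW_matrix_def by blast

lemma spinc_set_subset: "spinc_set n M S \<Longrightarrow> S \<subseteq> {1..n}"
  unfolding spinc_set_def by blast

lemma spinc_set_parity:
  "spinc_set n M S \<Longrightarrow> U \<subseteq> {1..n} \<Longrightarrow>
    card (symdiff (J n M U) U \<inter> S) mod 2 = (card U choose 2) mod 2"
  unfolding spinc_set_def by simp

lemma spinc_set_pair_odd_disagreement:
  assumes M: "HW_matrix n M" and sp: "spinc_set n M S"
    and il: "i \<in> S" "l \<in> S" "i \<noteq> l"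
  shows "odd (card {j \<in> S - {i, l}. M i j \<noteq> M l j})"
proof -
  have Ssub: "S \<subseteq> {1..n}" using sp by (rule spinc_set_subset)
  then have "finite S" by (rule finite_subset) simp
  have in_n: "i \<in> {1..n}" "l \<in> {1..n}" using il Ssub by auto
  have J_pair: "J n M {i, l} = {j \<in> {1..n}. M i j + M l j = K1}"
    unfolding J_def using il by simp
  have "M i i + M l i \<noteq> K1"
    using HW_matrix_diag[OF M in_n(1)] HW_matrix_off_diag[OF M in_n(2,1)] il K1_plus_off_neq_K1
    by simp
  moreover have "M i l + M l l \<noteq> K1"
    using HW_matrix_diag[OF M in_n(2)] HW_matrix_off_diag[OF M in_n] il
      K1_plus_off_neq_K1[of "M i l"]
    by (simp add: add.commute)
  ultimately have "{i, l} \<inter> J n M {i, l} = {}" unfolding J_pair by auto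
  moreover have "J n M {i, l} \<inter> (S - {i, l}) = {j \<in> S - {i, l}. M i j \<noteq> M l j}"
  proof (rule set_eqI)
    fix j
    show "j \<in> J n M {i, l} \<inter> (S - {i, l}) \<longleftrightarrow> j \<in> {j \<in> S - {i, l}. M i j \<noteq> M l j}"
    proof (cases "j \<in> S - {i, l}")
      case True
      then have "j \<in> {1..n}" using Ssub by auto
      then have "M i j \<in> {K2, K3}" "M l j \<in> {K2, K3}"
        using True in_n by (intro HW_matrix_off_diag[OF M]; auto)+
      then show ?thesis using True \<open>j \<in> {1..n}\<close> klein_off_sum_eq_K1 unfolding J_pair by simp
    next
      case False
      then show ?thesis by auto
    qed
  qed
  ultimately have "symdiff (J n M {i, l}) {i, l} \<inter> S
      = insert i (insert l {j \<in> S - {i, l}. M i j \<noteq> M l j})"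
    using il unfolding symdiff_def by auto
  moreover have "card (symdiff (J n M {i, l}) {i, l} \<inter> S) mod 2 = 1"
  proof -
    have "card {i, l} = 2" using il by simp
    then show ?thesis using spinc_set_parity[OF sp, of "{i, l}"] in_n by simp
  qed
  moreover have "card (insert i (insert l {j \<in> S - {i, l}. M i j \<noteq> M l j}))
      = card {j \<in> S - {i, l}. M i j \<noteq> M l j} + 2"
    using \<open>finite S\<close> il by simp
  ultimately show ?thesis by (simp add: odd_iff_mod_2_eq_one)
qed

lemma HW_matrix_J_triangle_empty:
  assumes M: "HW_matrix n M" and in_n: "a \<in> {1..n}" "b \<in> {1..n}" "c \<in> {1..n}"
    and distinct: "a \<noteq> b" "b \<noteq> c" "c \<noteq> a"
    and dis: "M b a \<noteq> M c a" "M a b \<noteq> M c b" "M a c \<noteq> M b c"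
  shows "J n M {a, b, c} = {}"
proof -
  have "M a j + (M b j + M c j) \<noteq> K1" if j: "j \<in> {1..n}" for j
  proof -
    have off: "M i j \<in> {K2, K3}" if "i \<in> {a, b, c}" "i \<noteq> j" for i
      using that in_n j HW_matrix_off_diag[OF M] by blast
    consider "j = a" | "j = b" | "j = c" | "j \<notin> {a, b, c}" by blast
    then show ?thesis
    proof cases
      case 1
      then show ?thesis
        using HW_matrix_diag[OF M j] off[of b] off[of c] distinct dis K1_plus_distinct_off_neq_K1
        by simp
    next
      case 2
      then have "M b j + (M a j + M c j) \<noteq> K1"
        using HW_matrix_diag[OF M j] off[of a] off[of c] distinct dis K1_plus_distinct_off_neq_K1
        by simp
      then show ?thesis by (simp add: ac_simps)
    next
      case 3
      then have "M c j + (M a j + M b j) \<noteq> K1"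
        using HW_matrix_diag[OF M j] off[of a] off[of b] distinct dis K1_plus_distinct_off_neq_K1
        by simp
      then show ?thesis by (simp add: ac_simps)
    next
      case 4
      then show ?thesis using off off_sum3_neq_K1 by blast
    qed
  qed
  then show ?thesis unfolding J_def using distinct by auto
qed

theorem HW_matrix_spinc_set_card_le_1:
  assumes M: "HW_matrix n M" and "n \<ge> 4" and sp: "spinc_set n M S"
  shows "card S \<le> 1"
proof (rule ccontr)
  assume "\<not> card S \<le> 1"
  then have two: "card S \<ge> 2" by simp
  have Ssub: "S \<subseteq> {1..n}" using sp by (rule spinc_set_subset)
  then have fin: "finite S" by (rule finite_subset) simp
  define x where "x i j = (M i j = K3)" for i j
  have x_neq: "x i j \<noteq> x l j \<longleftrightarrow> M i j \<noteq> M l j"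
    if "i \<in> S" "l \<in> S" "j \<in> S" "j \<noteq> i" "j \<noteq> l" for i j l
  proof -
    have "i \<in> {1..n}" "l \<in> {1..n}" "j \<in> {1..n}" using that Ssub by auto
    then have "M i j \<in> {K2, K3}" "M l j \<in> {K2, K3}"
      using that by (intro HW_matrix_off_diag[OF M]; simp)+
    then show ?thesis unfolding x_def by auto
  qed
  have odd_dis: "odd (card {j \<in> S - {i, l}. x i j \<noteq> x l j})"
    if il: "i \<in> S" "l \<in> S" "i \<noteq> l" for i l
  proof -
    have "{j \<in> S - {i, l}. x i j \<noteq> x l j} = {j \<in> S - {i, l}. M i j \<noteq> M l j}"
      using x_neq il by auto
    then show ?thesis using spinc_set_pair_odd_disagreement[OF M sp il] by simp
  qed
  obtain a b c where abc: "a \<in> S" "b \<in> S" "c \<in> S" "a \<noteq> b" "b \<noteq> c" "c \<noteq> a"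
      "x b a \<noteq> x c a" "x a b \<noteq> x c b" "x a c \<noteq> x b c"
    using rows_odd_disagreement_triangle[OF fin two odd_dis] by blast
  then have "J n M {a, b, c} = {}"
    using Ssub x_neq by (intro HW_matrix_J_triangle_empty[OF M]) auto
  moreover have "{a, b, c} \<subseteq> {1..n}" using abc Ssub by auto
  moreover have "{a, b, c} \<noteq> {1..n}"
  proof
    assume "{a, b, c} = {1..n}"
    then have "card {a, b, c} = n" by simp
    then show False using abc \<open>n \<ge> 4\<close> by simp
  qed
  ultimately show False using HW_matrix_J_nonempty[OF M] by blast
qed

theorem mainTheorem16:
  fixes n :: nat and M :: "nat \<Rightarrow> nat \<Rightarrow> klein"
  assumes "odd n" and "n \<ge> 5" and "HW_matrix n M"
  shows "\<not> (\<exists>S. spinc_set n M S \<and> card S = n - 1)"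
  using HW_matrix_spinc_set_card_le_1[OF assms(3)] assms(2) by fastforce

end
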